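(* Let $N(u)=\sum_{\lambda,m}c(\lambda,m)u^{\lambda}(\log u)^m$ be a finite sum with $\lambda\in\mathbb C$, $m\in\mathbb Z_{\ge0}$ and $c(\lambda,m)\in\mathbb Z$. Then: (a) $\zeta_N(s)$ has an analytic continuation with isolated singularities to all $s\in\mathbb C$; (b) $\zeta_{N^*}(-s)=\zeta_N(s)\,(-1)^{N(1)}$ and $\varepsilon_N(s)=(-1)^{N(1)}$.
   Context: For measurable $N:(1,\infty)\to\mathbb C$ let $Z_N(w,s)=\frac1{\Gamma(w)}\int_1^\infty\frac{N(u)}{u^{s+1}}(\log u)^{w-1}du$ (convergent for $\operatorname{Re}(s)$ large and $w$ in an open domain, extended holomorphically to $w=0$), and $\zeta_N(s)=\exp\big(\frac{\partial}{\partial w}Z_N(w,s)\big|_{w=0}\big)$. For $N$ defined on $(0,\infty)$, $N^*(u)=N(1/u)$, and $\varepsilon_N(s)=\zeta_{N^*}(-s)/\zeta_N(s)$. *)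

theory Defs
  imports "HOL-Analysis.Analysis" "HOL-Complex_Analysis.Complex_Analysis"
begin

definition Z_integrand :: "(real \<Rightarrow> complex) \<Rightarrow> complex \<Rightarrow> complex \<Rightarrow> real \<Rightarrow> complex" where
  "Z_integrand N w s u =
     N u / (complex_of_real u) powr (s + 1) * (complex_of_real (ln u)) powr (w - 1)"

definition Z_conv :: "(real \<Rightarrow> complex) \<Rightarrow> complex \<Rightarrow> complex \<Rightarrow> bool" where
  "Z_conv N w s \<longleftrightarrow> set_integrable lborel {1<..} (Z_integrand N w s)"

text \<open>Z_N(w,s) = 1/Gamma(w) * integral, where 1/Gamma is the entire function rGamma.\<close>
definition Z_int :: "(real \<Rightarrow> complex) \<Rightarrow> complex \<Rightarrow> complex \<Rightarrow> complex" where
  "Z_int N w s = rGamma w * (LINT u:{1<..}|lborel. Z_integrand N w s u)"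

text \<open>F is a holomorphic extension (in w, for fixed s) of Z_N(.,s) to a connected open
  domain U containing w = 0: F agrees with the convergent integral on a nonempty open set.\<close>
definition Z_ext :: "(real \<Rightarrow> complex) \<Rightarrow> complex \<Rightarrow> (complex \<Rightarrow> complex) \<Rightarrow> complex set \<Rightarrow> bool" where
  "Z_ext N s F U \<longleftrightarrow> open U \<and> connected U \<and> 0 \<in> U \<and> F holomorphic_on U \<and>
     (\<exists>V. open V \<and> V \<noteq> {} \<and> V \<subseteq> U \<and> (\<forall>w\<in>V. Z_conv N w s \<and> F w = Z_int N w s))"

definition zetaN :: "(real \<Rightarrow> complex) \<Rightarrow> complex \<Rightarrow> complex" where
  "zetaN N s = exp (THE d. \<exists>F U. Z_ext N s F U \<and> deriv F 0 = d)"

definition Nstar :: "(real \<Rightarrow> complex) \<Rightarrow> real \<Rightarrow> complex" where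
  "Nstar N u = N (1 / u)"

text \<open>g is an analytic continuation of f (given on some right half-plane) to all of C
  with isolated singularities: g is holomorphic off a set S without limit points, and
  agrees with f on a half-plane Re s > sigma.\<close>
definition continuation_isolated :: "(complex \<Rightarrow> complex) \<Rightarrow> complex set \<Rightarrow> (complex \<Rightarrow> complex) \<Rightarrow> bool" where
  "continuation_isolated f S g \<longleftrightarrow>
     (\<forall>z. \<not> z islimpt S) \<and> g holomorphic_on (- S) \<and>
     (\<exists>\<sigma>::real. \<forall>s. \<sigma> < Re s \<longrightarrow> g s = f s)"

end

theory Submission
  imports Defs
begin

text \<open>For \<open>Re w > 0\<close> and \<open>Re s\<close> beyond all exponents, the monomial \<open>u\<^sup>\<lambda> (log u)\<^sup>m\<close> contributes
  \<open>\<integral>\<^sub>1\<^sup>\<infinity> u\<^sup>-\<^sup>(\<^sup>s\<^sup>-\<^sup>\<lambda>\<^sup>+\<^sup>1\<^sup>) (log u)\<^sup>w\<^sup>+\<^sup>m\<^sup>-\<^sup>1 du = \<Gamma>(w+m) (s-\<lambda>)\<^sup>-\<^sup>(\<^sup>w\<^sup>+\<^sup>m\<^sup>)\<close>, so \<open>Z\<^sub>N(w,s)\<close> is a finite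
  sum of the entire functions \<open>c (w)\<^sub>m (s-\<lambda>)\<^sup>-\<^sup>(\<^sup>w\<^sup>+\<^sup>m\<^sup>)\<close> of \<open>w\<close>. Differentiating at \<open>w = 0\<close> gives
  \<open>\<zeta>\<^sub>N(s)\<close> as a finite product of factors \<open>(s-\<lambda>)\<^sup>-\<^sup>c\<close> (for \<open>m = 0\<close>) and \<open>exp (c (m-1)! / (s-\<lambda>)\<^sup>m)\<close>
  (for \<open>m > 0\<close>), holomorphic off the finitely many \<open>\<lambda>\<close>. \<open>N\<^sup>*\<close> has the same shape with
  exponents \<open>-\<lambda>\<close> and coefficients \<open>(-1)\<^sup>m c\<close>, and replacing \<open>s\<close> by \<open>-s\<close> changes only the
  factors with \<open>m = 0\<close>, each by \<open>(-1)\<^sup>c\<close>; these \<open>c\<close> sum to \<open>N(1)\<close>. As the complement of a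
  discrete set is connected, every continuation agrees with the explicit product.\<close>

section \<open>Holomorphic dependence of parameter integrals\<close>

lemma norm_difference_quotient_le_of_bounded:
  fixes f :: "complex \<Rightarrow> complex"
  assumes hol: "f holomorphic_on R" and R: "open R" and r: "r > 0" and sub: "cball w0 r \<subseteq> R"
    and bound: "\<And>w. w \<in> cball w0 r \<Longrightarrow> norm (f w) \<le> M"
    and x: "x \<in> cball w0 (r / 2)" "x \<noteq> w0"
  shows "norm ((f x - f w0) / (x - w0)) \<le> 2 * M / r"
proof -
  have "norm (f x - f w0) \<le> 2 * M / r * norm (x - w0)"
  proof (rule field_differentiable_bound[where S="cball w0 (r/2)" and f'="deriv f"])
    fix z assume z: "z \<in> cball w0 (r/2)"
    have "z \<in> R" using z r sub by (auto simp: subset_iff)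
    then show "(f has_field_derivative deriv f z) (at z within cball w0 (r/2))"
      by (rule holomorphic_derivI[OF hol R])
    have sub': "cball z (r/2) \<subseteq> cball w0 r"
      using z by (subst cball_subset_cball_iff) (auto simp: dist_commute)
    have "norm ((deriv ^^ 1) f z) \<le> fact 1 * M / (r/2) ^ 1"
    proof (rule Cauchy_inequality)
      show "f holomorphic_on ball z (r/2)"
        using hol sub sub' ball_subset_cball by (meson holomorphic_on_subset order_trans)
      show "continuous_on (cball z (r/2)) f"
        using hol sub sub' by (meson holomorphic_on_imp_continuous_on holomorphic_on_subset order_trans)
      fix y assume "norm (z - y) = r/2"
      then show "norm (f y) \<le> M" using sub' bound by (auto simp: dist_norm)
    qed (use r in simp)
    then show "norm (deriv f z) \<le> 2 * M / r" by (simp add: mult.commute)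
  qed (use x r in auto)
  then show ?thesis using x by (simp add: norm_divide divide_le_eq)
qed

lemma tendsto_set_integral_dominated_at:
  fixes q :: "'a::first_countable_topology \<Rightarrow> 'b \<Rightarrow> 'c::{banach, second_countable_topology}"
  assumes [measurable]: "B \<in> sets M"
    and meas: "eventually (\<lambda>w. q w \<in> borel_measurable M) (at w0)"
    and lim: "\<And>t. t \<in> B \<Longrightarrow> ((\<lambda>w. q w t) \<longlongrightarrow> l t) (at w0)"
    and h: "set_integrable M B h"
    and bound: "eventually (\<lambda>w. \<forall>t\<in>B. norm (q w t) \<le> h t) (at w0)"
  shows "((\<lambda>w. LINT t:B|M. q w t) \<longlongrightarrow> (LINT t:B|M. l t)) (at w0)"
  unfolding tendsto_at_iff_sequentially
proof (intro allI impI)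
  fix X :: "nat \<Rightarrow> 'a" assume "\<forall>i. X i \<in> UNIV - {w0}" "X \<longlonglongrightarrow> w0"
  then have X: "filterlim X (at w0) sequentially"
    by (simp add: filterlim_at always_eventually)
  have "eventually (\<lambda>n. q (X n) \<in> borel_measurable M \<and> (\<forall>t\<in>B. norm (q (X n) t) \<le> h t)) sequentially"
    using eventually_conj[OF meas bound] X by (rule eventually_compose_filterlim)
  then obtain n0 where n0: "\<And>n. n \<ge> n0 \<Longrightarrow> q (X n) \<in> borel_measurable M \<and> (\<forall>t\<in>B. norm (q (X n) t) \<le> h t)"
    unfolding eventually_sequentially by blast
  define s where "s n t = indicator B t *\<^sub>R q (X (n + n0)) t" for n t
  have s_meas: "s n \<in> borel_measurable M" for n
    using n0[of "n + n0"] unfolding s_def by (intro borel_measurable_scaleR borel_measurable_indicator) auto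
  have s_lim: "(\<lambda>n. s n t) \<longlonglongrightarrow> indicator B t *\<^sub>R l t" for t
  proof (cases "t \<in> B")
    case True
    have "(\<lambda>n. q (X n) t) \<longlonglongrightarrow> l t"
      using filterlim_compose[OF lim[OF True] X] .
    then have "(\<lambda>n. q (X (n + n0)) t) \<longlonglongrightarrow> l t"
      by (rule LIMSEQ_ignore_initial_segment)
    then show ?thesis
      unfolding s_def using True by simp
  qed (simp add: s_def)
  have "(\<lambda>n. integral\<^sup>L M (s n)) \<longlonglongrightarrow> integral\<^sup>L M (\<lambda>t. indicator B t *\<^sub>R l t)"
  proof (rule integral_dominated_convergence[OF _ s_meas])
    show "(\<lambda>t. indicator B t *\<^sub>R l t) \<in> borel_measurable M"
      by (rule borel_measurable_LIMSEQ_metric[OF s_meas s_lim])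
    show "integrable M (\<lambda>t. indicator B t *\<^sub>R h t)"
      using h unfolding set_integrable_def .
    show "AE t in M. norm (s n t) \<le> indicator B t *\<^sub>R h t" for n
      using n0[of "n + n0"] by (intro AE_I2) (simp add: s_def indicator_def)
    show "AE t in M. (\<lambda>n. s n t) \<longlonglongrightarrow> indicator B t *\<^sub>R l t"
      by (intro AE_I2 s_lim)
  qed
  then show "((\<lambda>w. LINT t:B|M. q w t) \<circ> X) \<longlonglongrightarrow> (LINT t:B|M. l t)"
    unfolding s_def set_lebesgue_integral_def o_def by (rule LIMSEQ_offset)
qed

lemma set_integral_has_field_derivative:
  fixes f :: "complex \<Rightarrow> real \<Rightarrow> complex"
  assumes R: "open R" and B[measurable]: "B \<in> sets lborel"
    and hol: "\<And>t. t \<in> B \<Longrightarrow> (\<lambda>w. f w t) holomorphic_on R"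
    and meas: "\<And>w. w \<in> R \<Longrightarrow> f w \<in> borel_measurable lborel"
    and r: "r > 0" "cball w0 r \<subseteq> R" and g: "set_integrable lborel B g"
    and bound: "\<And>w t. w \<in> cball w0 r \<Longrightarrow> t \<in> B \<Longrightarrow> norm (f w t) \<le> g t"
  shows "((\<lambda>w. LINT t:B|lborel. f w t) has_field_derivative
           (LINT t:B|lborel. deriv (\<lambda>w. f w t) w0)) (at w0)"
proof -
  have w0: "w0 \<in> R" using r by auto
  have near: "eventually (\<lambda>w. w \<in> ball w0 (r/2) - {w0}) (at w0)"
    using r by (intro eventually_at_in_open) auto
  have near_R: "w \<in> R" "w \<in> cball w0 r" if "w \<in> ball w0 (r/2) - {w0}" for w
    using that r by (auto simp: subset_iff)
  have int: "set_integrable lborel B (f w)" if "w \<in> cball w0 r" for w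
  proof (rule set_integrable_bound[OF g])
    show "set_borel_measurable lborel B (f w)"
      using meas[of w] that r unfolding set_borel_measurable_def by auto
    show "AE t in lborel. t \<in> B \<longrightarrow> norm (f w t) \<le> norm (g t)"
      using bound[OF that] by (intro AE_I2) force
  qed
  have quotient_bound: "norm ((f w t - f w0 t) / (w - w0)) \<le> 2 * g t / r"
    if "w \<in> ball w0 (r/2) - {w0}" "t \<in> B" for w t
    using that bound hol r by (intro norm_difference_quotient_le_of_bounded[where f="\<lambda>w. f w t" and R=R]) (auto simp: R)
  have "((\<lambda>w. LINT t:B|lborel. (f w t - f w0 t) / (w - w0)) \<longlongrightarrow> (LINT t:B|lborel. deriv (\<lambda>w. f w t) w0)) (at w0)"
  proof (rule tendsto_set_integral_dominated_at[where h="\<lambda>t. 2 * g t / r"])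
    show "eventually (\<lambda>w. (\<lambda>t. (f w t - f w0 t) / (w - w0)) \<in> borel_measurable lborel) (at w0)"
      using near
    proof eventually_elim
      case (elim w)
      then show ?case using meas[OF near_R(1)[OF elim]] meas[OF w0] by measurable
    qed
    show "((\<lambda>w. (f w t - f w0 t) / (w - w0)) \<longlongrightarrow> deriv (\<lambda>w. f w t) w0) (at w0)" if "t \<in> B" for t
      using holomorphic_derivI[OF hol[OF that] R w0] by (simp add: has_field_derivative_iff)
    show "set_integrable lborel B (\<lambda>t. 2 * g t / r)"
      using set_integrable_mult_right[OF g, of "2 / r"] by (simp add: mult_ac)
    show "eventually (\<lambda>w. \<forall>t\<in>B. norm ((f w t - f w0 t) / (w - w0)) \<le> 2 * g t / r) (at w0)"
      using near by eventually_elim (use quotient_bound in blast)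
  qed (rule B)
  moreover have "eventually (\<lambda>w. (LINT t:B|lborel. (f w t - f w0 t) / (w - w0)) =
      ((LINT t:B|lborel. f w t) - (LINT t:B|lborel. f w0 t)) / (w - w0)) (at w0)"
    using near by eventually_elim (use r near_R in \<open>simp add: set_integral_diff(2)[OF int int]\<close>)
  ultimately show ?thesis
    unfolding has_field_derivative_iff by (rule Lim_transform_eventually)
qed

lemma holomorphic_on_set_integral:
  fixes f :: "complex \<Rightarrow> real \<Rightarrow> complex"
  assumes R: "open R" and B: "B \<in> sets lborel"
    and hol: "\<And>t. t \<in> B \<Longrightarrow> (\<lambda>w. f w t) holomorphic_on R"
    and meas: "\<And>w. w \<in> R \<Longrightarrow> f w \<in> borel_measurable lborel"
    and dom: "\<And>w. w \<in> R \<Longrightarrow> \<exists>r>0. cball w r \<subseteq> R \<and> (\<exists>g. set_integrable lborel B g \<and>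
                (\<forall>w'\<in>cball w r. \<forall>t\<in>B. norm (f w' t) \<le> g t))"
  shows "(\<lambda>w. LINT t:B|lborel. f w t) holomorphic_on R"
  unfolding holomorphic_on_def
proof
  fix w assume "w \<in> R"
  then obtain r g where "r > 0" "cball w r \<subseteq> R" "set_integrable lborel B g"
    "\<And>w' t. w' \<in> cball w r \<Longrightarrow> t \<in> B \<Longrightarrow> norm (f w' t) \<le> g t"
    using dom by blast
  then have "(\<lambda>w. LINT t:B|lborel. f w t) field_differentiable (at w)"
    unfolding field_differentiable_def
    using set_integral_has_field_derivative[OF R B hol meas] by blast
  then show "(\<lambda>w. LINT t:B|lborel. f w t) field_differentiable (at w within R)"
    by (rule field_differentiable_at_within)
qed

lemma set_integrable_sum:
  fixes f :: "'i \<Rightarrow> 'a \<Rightarrow> 'b::{banach, second_countable_topology}"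
  assumes "\<And>i. i \<in> I \<Longrightarrow> set_integrable M B (f i)"
  shows "set_integrable M B (\<lambda>x. \<Sum>i\<in>I. f i x)"
  using assms unfolding set_integrable_def by (simp add: scaleR_sum_right)

lemma set_integral_sum:
  fixes f :: "'i \<Rightarrow> 'a \<Rightarrow> 'b::{banach, second_countable_topology}"
  assumes "\<And>i. i \<in> I \<Longrightarrow> set_integrable M B (f i)"
  shows "(LINT x:B|M. (\<Sum>i\<in>I. f i x)) = (\<Sum>i\<in>I. LINT x:B|M. f i x)"
  using assms unfolding set_integrable_def set_lebesgue_integral_def
  by (simp add: scaleR_sum_right Bochner_Integration.integral_sum)

section \<open>A Gamma-type integral over \<open>(1, \<infinity>)\<close>\<close>

lemma powr_of_real_eq_exp: "x > 0 \<Longrightarrow> complex_of_real x powr w = exp (w * of_real (ln x))"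
  by (simp add: powr_def Ln_of_real)

lemma set_integrable_lborel_if_absolutely_integrable:
  fixes f :: "real \<Rightarrow> 'b::euclidean_space"
  assumes "f absolutely_integrable_on S" and [measurable]: "S \<in> sets borel" "f \<in> borel_measurable borel"
  shows "set_integrable lborel S f"
proof -
  have "(\<lambda>x. indicator S x *\<^sub>R f x) \<in> borel_measurable lborel" by measurable
  then show ?thesis using assms(1) integrable_completion unfolding set_integrable_def by blast
qed

lemma Gamma_integral_lborel:
  assumes "Re z > 0"
  shows "set_integrable lborel {0<..} (\<lambda>t. complex_of_real t powr (z - 1) / of_real (exp t))"
    "(LINT t:{0<..}|lborel. complex_of_real t powr (z - 1) / of_real (exp t)) = Gamma z"
proof -
  show i: "set_integrable lborel {0<..} (\<lambda>t. complex_of_real t powr (z - 1) / of_real (exp t))"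
    by (rule set_integrable_lborel_if_absolutely_integrable[OF absolutely_integrable_Gamma_integral'[OF assms]]) auto
  show "(LINT t:{0<..}|lborel. complex_of_real t powr (z - 1) / of_real (exp t)) = Gamma z"
    using set_borel_integral_eq_integral(2)[OF i] Gamma_integral_complex'[OF assms]
    by (simp add: integral_unique)
qed

lemma tendsto_exp_divide_ereal:
  fixes a :: real assumes a: "a > 0"
  shows "((ereal \<circ> (\<lambda>t. exp (t / a)) \<circ> real_of_ereal) \<longlongrightarrow> ereal 1) (at_right 0)"
    "((ereal \<circ> (\<lambda>t. exp (t / a)) \<circ> real_of_ereal) \<longlongrightarrow> \<infinity>) (at_left \<infinity>)"
proof -
  show "((ereal \<circ> (\<lambda>t. exp (t / a)) \<circ> real_of_ereal) \<longlongrightarrow> ereal 1) (at_right 0)"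
    using a by (auto simp: ereal_tendsto_simps zero_ereal_def intro!: tendsto_eq_intros)
  have "filterlim (\<lambda>x. x * inverse a) at_top at_top"
    using a by (intro filterlim_at_top_mult_tendsto_pos[OF tendsto_const] filterlim_ident) auto
  then show "((ereal \<circ> (\<lambda>t. exp (t / a)) \<circ> real_of_ereal) \<longlongrightarrow> \<infinity>) (at_left \<infinity>)"
    using a by (auto simp: ereal_tendsto_simps divide_inverse intro!: filterlim_compose[OF exp_at_top])
qed

lemma one_islimpt_positive_reals: "(1::complex) islimpt (complex_of_real ` {0<..})"
proof (rule islimpt_approachable[THEN iffD2], intro allI impI)
  fix e :: real assume e: "e > 0"
  define x where "x = 1 + min (e/2) (1/2)"
  have "complex_of_real x \<in> complex_of_real ` {0<..}"
    using e by (intro imageI) (simp add: x_def)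
  moreover have "dist (complex_of_real x) 1 = \<bar>x - 1\<bar>"
    using dist_of_real[of x 1] by (simp add: dist_real_def)
  ultimately show "\<exists>x'\<in>complex_of_real ` {0<..}. x' \<noteq> 1 \<and> dist x' 1 < e"
    using e by (intro bexI[of _ "of_real x"]) (auto simp: x_def)
qed

definition log_kernel :: "complex \<Rightarrow> complex \<Rightarrow> real \<Rightarrow> complex" where
  "log_kernel a z u = complex_of_real u powr (-(a+1)) * complex_of_real (ln u) powr (z - 1)"

lemma norm_log_kernel: "u > 1 \<Longrightarrow> norm (log_kernel a z u) = u powr (-(Re a+1)) * ln u powr (Re z - 1)"
  by (simp add: log_kernel_def norm_mult norm_powr_real_powr)

lemma log_kernel_measurable[measurable]: "log_kernel a z \<in> borel_measurable borel"
  unfolding log_kernel_def by measurable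

lemma holomorphic_on_log_kernel: "u > 1 \<Longrightarrow> (\<lambda>a. log_kernel a z u) holomorphic_on S"
  unfolding log_kernel_def by (simp add: powr_of_real_eq_exp) (intro holomorphic_intros)

lemma log_kernel_exp_substitution:
  fixes a t :: real assumes a: "a > 0" and t: "t > 0"
  shows "(exp (t / a) / a) *\<^sub>R log_kernel (of_real a) z (exp (t / a)) =
           of_real a powr (-z) * (complex_of_real t powr (z - 1) / of_real (exp t))"
proof -
  have "(exp (t / a) / a) *\<^sub>R log_kernel (of_real a) z (exp (t / a)) =
     exp (of_real (t/a) - of_real (ln a)) * (exp ((-(of_real a+1)) * of_real (t/a)) * exp ((z - 1) * of_real (ln t - ln a)))"
  proof -
    have log_factor: "complex_of_real (ln (exp (t/a))) powr (z - 1) = exp ((z - 1) * of_real (ln t - ln a))"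
      using a t powr_of_real_eq_exp[of "t/a" "z-1"] by (simp add: ln_div del: of_real_divide)
    have power_factor: "complex_of_real (exp (t/a)) powr (-(of_real a+1)) = exp ((-(of_real a+1)) * of_real (t/a))"
      using a t by (simp add: powr_of_real_eq_exp)
    have "exp (complex_of_real (ln a)) = of_real a" using a by (simp add: exp_of_real)
    moreover have "exp (complex_of_real (t/a)) = of_real (exp (t/a))" by (simp only: exp_of_real)
    ultimately have jacobian: "complex_of_real (exp (t / a) / a) = exp (of_real (t/a) - of_real (ln a))"
      by (simp add: exp_diff)
    show ?thesis unfolding log_kernel_def scaleR_conv_of_real log_factor power_factor jacobian ..
  qed
  also have "\<dots> = exp (of_real (t/a) - of_real (ln a) + (-(of_real a+1)) * of_real (t/a) + (z - 1) * of_real (ln t - ln a))"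
    by (simp add: exp_add)
  also have "of_real (t/a) - of_real (ln a) + (-(of_real a+1)) * of_real (t/a) + (z - 1) * of_real (ln t - ln a)
     = (-z) * of_real (ln a) + (z - 1) * of_real (ln t) - complex_of_real t"
    using a by (simp add: field_simps)
  also have "exp \<dots> = of_real a powr (-z) * (complex_of_real t powr (z - 1) / of_real (exp t))"
    using a t by (simp add: powr_of_real_eq_exp exp_add exp_diff exp_minus exp_of_real[symmetric] field_simps)
  finally show ?thesis .
qed

lemma set_integrable_log_kernel_real:
  fixes a x :: real assumes a: "a > 0" and x: "x > 0"
  shows "set_integrable lborel {1<..} (\<lambda>u. u powr (-(a+1)) * ln u powr (x - 1))"
proof -
  define f where "f = (\<lambda>u::real. u powr (-(a+1)) * ln u powr (x - 1))"
  have "f (exp (t / a)) * (exp (t / a) / a) = a powr (- x) * (t powr (x - 1) / exp t)" if t: "t > 0" for t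
  proof -
    have "f (exp (t / a)) * (exp (t / a) / a) =
        norm ((exp (t / a) / a) *\<^sub>R log_kernel (of_real a) (of_real x) (exp (t / a)))"
      using a t by (simp add: norm_log_kernel f_def)
    also have "\<dots> = a powr (- x) * (t powr (x - 1) / exp t)"
      using a t by (simp add: log_kernel_exp_substitution norm_mult norm_divide norm_powr_real_powr)
    finally show ?thesis .
  qed
  moreover have "set_integrable lborel {0<..} (\<lambda>t. a powr (- x) * (t powr (x - 1) / exp t))"
  proof (intro set_integrable_mult_right)
    have "set_integrable lborel {0<..} (\<lambda>t. norm (complex_of_real t powr (of_real x - 1) / of_real (exp t)))"
      using x by (intro set_integrable_norm Gamma_integral_lborel) simp
    then show "set_integrable lborel {0<..} (\<lambda>t. t powr (x - 1) / exp t)"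
      by (rule set_integrable_cong[THEN iffD1, rotated -1]) (auto simp: norm_divide norm_powr_real_powr)
  qed
  ultimately have "set_integrable lborel (einterval 0 \<infinity>) (\<lambda>t. f (exp (t / a)) * (exp (t / a) / a))"
    by (subst set_integrable_cong[OF refl]) (auto simp: zero_ereal_def)
  then have "set_integrable lborel (einterval 1 \<infinity>) f"
    using tendsto_exp_divide_ereal[OF a] a
    by (intro interval_integral_substitution_nonneg(1)[of 0 \<infinity> "\<lambda>t. exp (t / a)" "\<lambda>t. exp (t / a) / a" f])
       (auto simp: f_def zero_ereal_def one_ereal_def intro!: derivative_eq_intros continuous_intros)
  then show ?thesis by (simp add: f_def one_ereal_def)
qed

lemma set_integrable_log_kernel:
  assumes "Re a > 0" "Re z > 0"
  shows "set_integrable lborel {1<..} (log_kernel a z)"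
proof (rule set_integrable_bound[OF set_integrable_log_kernel_real[of "Re a" "Re z"]])
  show "set_borel_measurable lborel {1<..} (log_kernel a z)"
    unfolding set_borel_measurable_def by measurable
  show "AE x in lborel. x \<in> {1<..} \<longrightarrow> norm (log_kernel a z x) \<le> norm (x powr - (Re a + 1) * ln x powr (Re z - 1))"
    by (intro AE_I2) (simp add: norm_log_kernel)
qed (use assms in auto)

lemma set_integral_log_kernel_of_real:
  fixes a :: real assumes a: "a > 0" and z: "Re z > 0"
  shows "(LINT u:{1<..}|lborel. log_kernel (of_real a) z u) = Gamma z * of_real a powr (-z)"
proof -
  define g where "g = (\<lambda>t. exp (t / a))"
  define g' where "g' = (\<lambda>t. exp (t / a) / a)"
  have subst: "g' t *\<^sub>R log_kernel (of_real a) z (g t) = of_real a powr (-z) * (complex_of_real t powr (z - 1) / of_real (exp t))"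
    if "t > 0" for t
    unfolding g_def g'_def using a that by (rule log_kernel_exp_substitution)
  have "(LBINT x=ereal 1..\<infinity>. log_kernel (of_real a) z x) = (LBINT t=ereal 0..\<infinity>. g' t *\<^sub>R log_kernel (of_real a) z (g t))"
  proof (rule interval_integral_substitution_integrable)
    show "((ereal \<circ> g \<circ> real_of_ereal) \<longlongrightarrow> ereal 1) (at_right (ereal 0))"
      using tendsto_exp_divide_ereal(1)[OF a] by (simp add: g_def zero_ereal_def)
    show "((ereal \<circ> g \<circ> real_of_ereal) \<longlongrightarrow> \<infinity>) (at_left \<infinity>)"
      using tendsto_exp_divide_ereal(2)[OF a] by (simp add: g_def)
    show "set_integrable lborel (einterval (ereal 0) \<infinity>) (\<lambda>t. g' t *\<^sub>R log_kernel (of_real a) z (g t))"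
      by (subst set_integrable_cong[OF refl _ subst])
         (auto simp: zero_ereal_def simp del: times_divide_eq_right intro!: set_integrable_mult_right Gamma_integral_lborel(1)[OF z])
    show "set_integrable lborel (einterval (ereal 1) \<infinity>) (log_kernel (of_real a) z)"
      using set_integrable_log_kernel[of "of_real a" z] a z by simp
  qed (use a in \<open>auto simp: g_def g'_def log_kernel_def complex_nonpos_Reals_iff divide_le_0_iff
                      intro!: derivative_eq_intros continuous_intros\<close>)
  also have "(LBINT x=ereal 1..\<infinity>. log_kernel (of_real a) z x) = (LINT u:{1<..}|lborel. log_kernel (of_real a) z u)"
    by (rule interval_integral_to_infinity_eq)
  also have "(LBINT t=ereal 0..\<infinity>. g' t *\<^sub>R log_kernel (of_real a) z (g t)) =
     (LINT t:{0<..}|lborel. of_real a powr (-z) * (complex_of_real t powr (z - 1) / of_real (exp t)))"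
    unfolding interval_integral_to_infinity_eq by (rule set_lebesgue_integral_cong) (auto simp: subst)
  also have "\<dots> = of_real a powr (-z) * Gamma z"
    by (subst set_integral_mult_right) (simp only: Gamma_integral_lborel(2)[OF z])
  finally show ?thesis by simp
qed

lemma holomorphic_on_set_integral_log_kernel:
  assumes z: "Re z > 0"
  shows "(\<lambda>a. LINT u:{1<..}|lborel. log_kernel a z u) holomorphic_on {a. Re a > 0}"
proof (rule holomorphic_on_set_integral[OF open_halfspace_Re_gt])
  fix a :: complex assume "a \<in> {a. Re a > 0}"
  then have r: "Re a / 2 > 0" by simp
  have Re_bound: "Re a' \<ge> Re a / 2" if "a' \<in> cball a (Re a / 2)" for a'
    using that abs_Re_le_cmod[of "a - a'"] by (simp add: dist_norm)
  then have "cball a (Re a / 2) \<subseteq> {a. Re a > 0}" using r by force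
  moreover have "set_integrable lborel {1<..} (\<lambda>u. u powr (-(Re a / 2 + 1)) * ln u powr (Re z - 1))"
    using r z by (rule set_integrable_log_kernel_real)
  moreover have "norm (log_kernel a' z t) \<le> t powr (-(Re a / 2 + 1)) * ln t powr (Re z - 1)"
    if "a' \<in> cball a (Re a / 2)" "t \<in> {1<..}" for a' t
    using that Re_bound[OF that(1)] by (simp add: norm_log_kernel mult_right_mono powr_mono)
  ultimately show "\<exists>r>0. cball a r \<subseteq> {a. Re a > 0} \<and> (\<exists>g. set_integrable lborel {1<..} g \<and>
                (\<forall>a'\<in>cball a r. \<forall>t\<in>{1<..}. norm (log_kernel a' z t) \<le> g t))"
    using r by blast
qed (auto simp: holomorphic_on_log_kernel)

lemma set_integral_log_kernel:
  assumes a: "Re a > 0" and z: "Re z > 0"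
  shows "(LINT u:{1<..}|lborel. log_kernel a z u) = Gamma z * a powr (-z)"
proof -
  define f where "f a = (LINT u:{1<..}|lborel. log_kernel a z u) - Gamma z * a powr (-z)" for a
  have "f a = 0"
  proof (rule analytic_continuation[where f=f and U="complex_of_real ` {0<..}" and \<xi>=1 and S="{a. Re a > 0}"])
    show "f holomorphic_on {a. Re a > 0}"
      unfolding f_def using holomorphic_on_set_integral_log_kernel[OF z]
      by (intro holomorphic_intros) (auto simp: complex_nonpos_Reals_iff)
    show "connected {a. 0 < Re a}" by (intro convex_connected convex_halfspace_Re_gt)
    fix x assume "x \<in> complex_of_real ` {0<..}"
    then obtain y where "y > 0" "x = of_real y" by auto
    then show "f x = 0"
      using set_integral_log_kernel_of_real[of y z] z by (simp add: f_def)
  qed (use a one_islimpt_positive_reals in \<open>auto simp: open_halfspace_Re_gt\<close>)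
  then show ?thesis by (simp add: f_def)
qed

section \<open>The two-variable zeta function of a finite sum\<close>

lemma zetaN_cong:
  assumes "\<And>u. u > 1 \<Longrightarrow> N u = N' u"
  shows "zetaN N = zetaN N'"
proof -
  have integrand: "Z_integrand N w s u = Z_integrand N' w s u" if "u \<in> {1<..}" for w s u
    using assms that by (simp add: Z_integrand_def)
  have "Z_conv N = Z_conv N'"
    unfolding Z_conv_def by (intro ext set_integrable_cong) (auto simp: integrand)
  moreover have "Z_int N = Z_int N'"
    unfolding Z_int_def by (intro ext arg_cong2[where f="(*)"] set_lebesgue_integral_cong) (auto simp: integrand)
  ultimately have "Z_ext N = Z_ext N'"
    unfolding Z_ext_def[abs_def] by simp
  then show ?thesis
    unfolding zetaN_def[abs_def] by simp
qed

lemma norm_Z_integrand: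
  "u > 1 \<Longrightarrow> norm (Z_integrand N w s u) = norm (N u / of_real u powr (s+1)) * ln u powr (Re w - 1)"
  unfolding Z_integrand_def by (subst norm_mult) (simp add: norm_powr_real_powr)

lemma Z_integrand_measurable[measurable]:
  assumes [measurable]: "N \<in> borel_measurable borel"
  shows "Z_integrand N w s \<in> borel_measurable borel"
  unfolding Z_integrand_def by measurable

lemma holomorphic_on_Z_integrand: "u > 1 \<Longrightarrow> (\<lambda>w. Z_integrand N w s u) holomorphic_on S"
  unfolding Z_integrand_def by (simp add: powr_of_real_eq_exp) (auto intro!: holomorphic_intros)

lemma powr_le_add_powr:
  fixes x a b c :: real
  assumes "x > 0" "a \<le> b" "b \<le> c"
  shows "x powr b \<le> x powr a + x powr c"
proof (cases "x \<le> 1")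
  case True
  then have "x powr b \<le> x powr a" using assms by (intro powr_mono') auto
  then show ?thesis by (simp add: add_increasing2)
next
  case False
  then have "x powr b \<le> x powr c" using assms by (intro powr_mono) auto
  then show ?thesis by (simp add: add_increasing)
qed

text \<open>At a point strictly between, the integrand is dominated by the sum of the absolute
  integrands at the two ends, since \<open>y powr b \<le> y powr a + y powr c\<close> for \<open>a \<le> b \<le> c\<close>.\<close>
lemma holomorphic_on_Z_integral_strip:
  assumes [measurable]: "N \<in> borel_measurable borel"
    and conv: "Z_conv N w1 s" "Z_conv N w2 s"
  shows "(\<lambda>w. LINT u:{1<..}|lborel. Z_integrand N w s u) holomorphic_on {w. Re w > Re w1} \<inter> {w. Re w < Re w2}"
    (is "_ holomorphic_on ?strip")
proof (rule holomorphic_on_set_integral)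
  show "open ?strip"
    by (intro open_Int open_halfspace_Re_gt open_halfspace_Re_lt)
  define g where "g u = norm (Z_integrand N w1 s u) + norm (Z_integrand N w2 s u)" for u
  have g: "set_integrable lborel {1<..} g"
    unfolding g_def using conv unfolding Z_conv_def by (intro set_integral_add set_integrable_norm)
  fix w assume w: "w \<in> ?strip"
  define r where "r = min (Re w - Re w1) (Re w2 - Re w) / 2"
  have r: "r > 0" "2 * r \<le> Re w - Re w1" "2 * r \<le> Re w2 - Re w"
    using w by (auto simp: r_def)
  have Re_bound: "Re w - r \<le> Re w'" "Re w' \<le> Re w + r" if "w' \<in> cball w r" for w'
  proof -
    have "\<bar>Re (w - w')\<bar> \<le> r" using that abs_Re_le_cmod[of "w - w'"] by (simp add: dist_norm)
    then show "Re w - r \<le> Re w'" "Re w' \<le> Re w + r" by auto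
  qed
  have "cball w r \<subseteq> ?strip"
    using Re_bound r by fastforce
  moreover have "norm (Z_integrand N w' s u) \<le> g u" if "w' \<in> cball w r" "u \<in> {1<..}" for w' u
  proof -
    have "ln u powr (Re w' - 1) \<le> ln u powr (Re w1 - 1) + ln u powr (Re w2 - 1)"
      using that Re_bound[OF that(1)] r by (intro powr_le_add_powr) auto
    then have "norm (N u / of_real u powr (s+1)) * ln u powr (Re w' - 1) \<le>
        norm (N u / of_real u powr (s+1)) * (ln u powr (Re w1 - 1) + ln u powr (Re w2 - 1))"
      by (rule mult_left_mono) simp
    then show ?thesis
      using that by (simp add: g_def norm_Z_integrand distrib_left)
  qed
  ultimately show "\<exists>r>0. cball w r \<subseteq> ?strip \<and> (\<exists>g. set_integrable lborel {1<..} g \<and>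
                (\<forall>w'\<in>cball w r. \<forall>u\<in>{1<..}. norm (Z_integrand N w' s u) \<le> g u))"
    using r g by blast
qed (auto simp: holomorphic_on_Z_integrand)

definition log_poly :: "(complex \<times> nat) set \<Rightarrow> (complex \<Rightarrow> nat \<Rightarrow> int) \<Rightarrow> real \<Rightarrow> complex" where
  "log_poly A c u = (\<Sum>(l, m)\<in>A. of_int (c l m) * (complex_of_real u) powr l * (complex_of_real (ln u)) ^ m)"

lemma log_poly_measurable[measurable]: "log_poly A c \<in> borel_measurable borel"
  unfolding log_poly_def case_prod_unfold by measurable

text \<open>\<open>Z_term l m w s\<close> is \<open>Z\<^sub>N(w,s)\<close> for \<open>N(u) = u powr l * (ln u)^m\<close>, namely
  \<open>\<Gamma>(w+m) / \<Gamma>(w) * (s-l) powr -(w+m)\<close>; writing the quotient of Gamma values as a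
  Pochhammer symbol makes it entire in \<open>w\<close>.\<close>
definition Z_term :: "complex \<Rightarrow> nat \<Rightarrow> complex \<Rightarrow> complex \<Rightarrow> complex" where
  "Z_term l m w s = pochhammer w m * (s - l) powr (-(w + of_nat m))"

definition Z_log_poly :: "(complex \<times> nat) set \<Rightarrow> (complex \<Rightarrow> nat \<Rightarrow> int) \<Rightarrow> complex \<Rightarrow> complex \<Rightarrow> complex" where
  "Z_log_poly A c w s = (\<Sum>(l, m)\<in>A. of_int (c l m) * Z_term l m w s)"

lemma holomorphic_on_Z_log_poly:
  assumes "\<forall>(l, m)\<in>A. Re l < Re s"
  shows "(\<lambda>w. Z_log_poly A c w s) holomorphic_on S"
proof -
  have "s - l \<notin> \<real>\<^sub>\<le>\<^sub>0" if "(l, m) \<in> A" for l m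
    using assms that by (auto simp: complex_nonpos_Reals_iff)
  then show ?thesis
    unfolding Z_log_poly_def Z_term_def case_prod_unfold by (intro holomorphic_intros) auto
qed

lemma Z_integrand_log_poly:
  assumes u: "u > 1"
  shows "Z_integrand (log_poly A c) w s u = (\<Sum>(l, m)\<in>A. of_int (c l m) * log_kernel (s - l) (w + of_nat m) u)"
proof -
  have lnu: "ln u > 0" using u by simp
  have summand: "complex_of_real u powr l * complex_of_real (ln u) ^ m / complex_of_real u powr (s + 1) *
      complex_of_real (ln u) powr (w - 1) = log_kernel (s - l) (w + of_nat m) u" for l m
  proof -
    have "exp (complex_of_real (ln (ln u))) = of_real (ln u)"
      using lnu by (simp only: exp_of_real) simp
    then have "complex_of_real (ln u) ^ m = exp (of_nat m * of_real (ln (ln u)))"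
      by (simp only: exp_of_nat_mult)
    then show ?thesis using u lnu
      unfolding log_kernel_def by (simp add: powr_of_real_eq_exp exp_add[symmetric] exp_diff[symmetric] field_simps)
  qed
  have "Z_integrand (log_poly A c) w s u = (\<Sum>(l, m)\<in>A. of_int (c l m) * (complex_of_real u powr l *
      complex_of_real (ln u) ^ m / complex_of_real u powr (s + 1) * complex_of_real (ln u) powr (w - 1)))"
    unfolding Z_integrand_def log_poly_def
    by (simp add: sum_divide_distrib sum_distrib_left sum_distrib_right case_prod_unfold mult_ac)
  also have "\<dots> = (\<Sum>(l, m)\<in>A. of_int (c l m) * log_kernel (s - l) (w + of_nat m) u)"
    by (intro sum.cong refl) (auto simp only: summand split: prod.splits)
  finally show ?thesis .
qed

lemma
  assumes s: "\<forall>(l, m)\<in>A. Re l < Re s" and w: "Re w > 0"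
  shows Z_conv_log_poly: "Z_conv (log_poly A c) w s"
    and Z_int_log_poly: "Z_int (log_poly A c) w s = Z_log_poly A c w s"
proof -
  define F where "F p u = (case p of (l, m) \<Rightarrow> of_int (c l m) * log_kernel (s - l) (w + of_nat m) u)" for p u
  have kernel: "Re (s - l) > 0" "Re (w + of_nat m) > 0" if "(l, m) \<in> A" for l m
    using s w that by auto
  have int: "set_integrable lborel {1<..} (F p)" if "p \<in> A" for p
    using that kernel unfolding F_def by (cases p) (auto intro!: set_integrable_mult_right set_integrable_log_kernel)
  have integrand: "Z_integrand (log_poly A c) w s u = (\<Sum>p\<in>A. F p u)" if "u \<in> {1<..}" for u
    using that by (simp add: Z_integrand_log_poly F_def case_prod_unfold)
  show "Z_conv (log_poly A c) w s"
    unfolding Z_conv_def by (subst set_integrable_cong[OF refl refl integrand]) (auto intro!: set_integrable_sum[OF int])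
  have "w \<notin> \<int>\<^sub>\<le>\<^sub>0"
    using w nonpos_Ints_subset_nonpos_Reals by (fastforce simp: complex_nonpos_Reals_iff)
  then have poch: "rGamma w * Gamma (w + of_nat m) = pochhammer w m" for m
    by (simp add: pochhammer_Gamma rGamma_inverse_Gamma field_simps)
  have "(LINT u:{1<..}|lborel. Z_integrand (log_poly A c) w s u) = (LINT u:{1<..}|lborel. \<Sum>p\<in>A. F p u)"
    by (rule set_lebesgue_integral_cong) (auto simp: integrand)
  also have "\<dots> = (\<Sum>p\<in>A. LINT u:{1<..}|lborel. F p u)"
    by (rule set_integral_sum[OF int])
  also have "\<dots> = (\<Sum>(l, m)\<in>A. of_int (c l m) * (Gamma (w + of_nat m) * (s - l) powr (-(w + of_nat m))))"
    using kernel unfolding F_def by (intro sum.cong) (auto simp: set_integral_log_kernel)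
  finally show "Z_int (log_poly A c) w s = Z_log_poly A c w s"
    unfolding Z_int_def Z_log_poly_def Z_term_def
    by (simp add: sum_distrib_left case_prod_unfold poch[symmetric] mult_ac)
qed

text \<open>Both sides are holomorphic on the strip from \<open>Re w1\<close> to a point of the half-plane
  \<open>Re w > 0\<close>, where they agree.\<close>
lemma Z_int_log_poly_right_of_conv:
  assumes s: "\<forall>(l, m)\<in>A. Re l < Re s"
    and conv: "Z_conv (log_poly A c) w1 s" and w: "Re w1 < Re w"
  shows "Z_int (log_poly A c) w s = Z_log_poly A c w s"
proof -
  define x where "x = \<bar>Re w\<bar> + 1"
  define strip where "strip = {w'. Re w' > Re w1} \<inter> {w'. Re w' < x}"
  define f where "f w' = Z_int (log_poly A c) w' s - Z_log_poly A c w' s" for w'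
  have "open strip"
    unfolding strip_def by (intro open_Int open_halfspace_Re_gt open_halfspace_Re_lt)
  define \<xi> where "\<xi> = complex_of_real ((max (Re w1) 0 + x) / 2)"
  have \<xi>: "\<xi> \<in> strip \<inter> {w'. Re w' > 0}"
    using w by (auto simp: \<xi>_def strip_def x_def)
  have "f w = 0"
  proof (rule analytic_continuation[where f=f and S=strip and U="strip \<inter> {w'. Re w' > 0}" and \<xi>=\<xi>])
    have "Z_conv (log_poly A c) (of_real x) s"
      by (rule Z_conv_log_poly[OF s]) (simp add: x_def)
    then have "(\<lambda>w'. LINT u:{1<..}|lborel. Z_integrand (log_poly A c) w' s u) holomorphic_on strip"
      using holomorphic_on_Z_integral_strip[OF log_poly_measurable conv, of "of_real x"] by (simp add: strip_def)
    then show "f holomorphic_on strip"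
      unfolding f_def Z_int_def by (intro holomorphic_intros holomorphic_on_Z_log_poly s)
    show "connected strip"
      unfolding strip_def by (intro convex_connected convex_Int convex_halfspace_Re_gt convex_halfspace_Re_lt)
    show "\<xi> islimpt strip \<inter> {w'. Re w' > 0}"
      using \<xi> \<open>open strip\<close> by (intro open_imp_islimpt open_Int open_halfspace_Re_gt)
  qed (use \<open>open strip\<close> \<xi> w s in \<open>auto simp: f_def strip_def x_def Z_int_log_poly\<close>)
  then show ?thesis by (simp add: f_def)
qed

lemma Z_ext_log_poly_eq:
  assumes s: "\<forall>(l, m)\<in>A. Re l < Re s" and ext: "Z_ext (log_poly A c) s F U" and w: "w \<in> U"
  shows "F w = Z_log_poly A c w s"
proof -
  obtain V where U: "open U" "connected U" "F holomorphic_on U"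
    and V: "open V" "V \<noteq> {}" "V \<subseteq> U"
      "\<And>w. w \<in> V \<Longrightarrow> Z_conv (log_poly A c) w s \<and> F w = Z_int (log_poly A c) w s"
    using ext unfolding Z_ext_def by blast
  have on_V: "F v - Z_log_poly A c v s = 0" if v: "v \<in> V" for v
  proof -
    obtain \<epsilon> where \<epsilon>: "\<epsilon> > 0" "ball v \<epsilon> \<subseteq> V" using V(1) v openE by blast
    then have "v - of_real (\<epsilon>/2) \<in> V" by (auto simp: dist_norm)
    then have "Z_conv (log_poly A c) (v - of_real (\<epsilon>/2)) s" using V(4) by blast
    then show ?thesis
      using Z_int_log_poly_right_of_conv[OF s] V(4)[OF v] \<epsilon>(1) by simp
  qed
  obtain v where v: "v \<in> V" using V(2) by blast
  have "(\<lambda>w. F w - Z_log_poly A c w s) w = 0"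
  proof (rule analytic_continuation[where f="\<lambda>w. F w - Z_log_poly A c w s" and S=U and U=V and \<xi>=v])
    show "(\<lambda>w. F w - Z_log_poly A c w s) holomorphic_on U"
      by (intro holomorphic_intros U(3) holomorphic_on_Z_log_poly s)
    show "v islimpt V" by (rule open_imp_islimpt[OF V(1) v])
  qed (use U V v w on_V in auto)
  then show ?thesis by simp
qed

lemma zetaN_log_poly:
  assumes s: "\<forall>(l, m)\<in>A. Re l < Re s"
  shows "zetaN (log_poly A c) s = exp (deriv (\<lambda>w. Z_log_poly A c w s) 0)"
proof -
  have ext: "Z_ext (log_poly A c) s (\<lambda>w. Z_log_poly A c w s) UNIV"
    unfolding Z_ext_def
  proof (intro conjI exI[of _ "{w. Re w > 0}"] ballI)
    show "{w. Re w > 0} \<noteq> {}" by (auto intro!: exI[of _ 1])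
  qed (simp_all add: open_halfspace_Re_gt connected_UNIV holomorphic_on_Z_log_poly[OF s] Z_conv_log_poly[OF s] Z_int_log_poly[OF s])
  have deriv_eq: "deriv F 0 = deriv (\<lambda>w. Z_log_poly A c w s) 0" if "Z_ext (log_poly A c) s F U" for F U
  proof (rule deriv_cong_ev)
    have "open U" "0 \<in> U" using that by (auto simp: Z_ext_def)
    then have "eventually (\<lambda>w. w \<in> U) (nhds 0)" by (rule eventually_nhds_in_open)
    then show "eventually (\<lambda>w. F w = Z_log_poly A c w s) (nhds 0)"
      by eventually_elim (rule Z_ext_log_poly_eq[OF s that])
  qed simp
  have "(THE d. \<exists>F U. Z_ext (log_poly A c) s F U \<and> deriv F 0 = d) = deriv (\<lambda>w. Z_log_poly A c w s) 0"
  proof (rule the_equality)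
    show "\<exists>F U. Z_ext (log_poly A c) s F U \<and> deriv F 0 = deriv (\<lambda>w. Z_log_poly A c w s) 0"
      using ext by blast
  qed (use deriv_eq in blast)
  then show ?thesis unfolding zetaN_def by simp
qed

section \<open>The zeta function as a finite product\<close>

definition Z_term_deriv0 :: "complex \<Rightarrow> nat \<Rightarrow> complex \<Rightarrow> complex" where
  "Z_term_deriv0 l m s = (if m = 0 then - Ln (s - l) else fact (m - 1) / (s - l) ^ m)"

lemma has_field_derivative_Z_term:
  assumes sl: "s \<noteq> l"
  shows "((\<lambda>w. Z_term l m w s) has_field_derivative Z_term_deriv0 l m s) (at 0)"
proof -
  define L where "L = Ln (s - l)"
  have Z_term_eq: "(\<lambda>w. Z_term l m w s) = (\<lambda>w. pochhammer w m * exp (-(w + of_nat m) * L))"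
    using sl by (auto simp: Z_term_def powr_def L_def fun_eq_iff)
  have d_exp: "((\<lambda>w::complex. exp (-(w + of_nat m) * L)) has_field_derivative (- L) * exp (- (of_nat m) * L)) (at 0)"
    by (auto intro!: derivative_eq_intros)
  show ?thesis
  proof (cases m)
    case 0
    then show ?thesis using d_exp unfolding Z_term_eq by (simp add: Z_term_deriv0_def L_def)
  next
    case (Suc k)
    txt \<open>\<open>pochhammer w m = w * pochhammer (w + 1) k\<close> vanishes at \<open>0\<close>, so only its derivative
      \<open>pochhammer 1 k = k!\<close> survives.\<close>
    have "(\<lambda>w::complex. pochhammer (w + 1) k) field_differentiable (at 0)"
      by (rule holomorphic_on_imp_differentiable_at[of _ UNIV]) (intro holomorphic_intros, auto)
    then obtain P' where P': "((\<lambda>w::complex. pochhammer (w + 1) k) has_field_derivative P') (at 0)"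
      unfolding field_differentiable_def by blast
    have "((\<lambda>w. (w * pochhammer (w + 1) k) * exp (-(w + of_nat m) * L)) has_field_derivative
        pochhammer 1 k * exp (- (of_nat m) * L)) (at 0)"
      using DERIV_mult[OF DERIV_mult[OF DERIV_ident P'] d_exp] by simp
    moreover have "(\<lambda>w. Z_term l m w s) = (\<lambda>w. (w * pochhammer (w + 1) k) * exp (-(w + of_nat m) * L))"
      using Z_term_eq unfolding Suc pochhammer_rec by simp
    moreover have "exp (- (of_nat m) * L) = inverse ((s - l) ^ m)"
      using sl by (simp add: L_def exp_minus exp_of_nat_mult)
    ultimately show ?thesis
      using Suc by (simp add: Z_term_deriv0_def pochhammer_fact field_simps)
  qed
qed

lemma deriv_Z_log_poly:
  assumes s: "\<forall>(l, m)\<in>A. Re l < Re s"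
  shows "deriv (\<lambda>w. Z_log_poly A c w s) 0 = (\<Sum>(l, m)\<in>A. of_int (c l m) * Z_term_deriv0 l m s)"
  unfolding Z_log_poly_def case_prod_unfold
proof (intro DERIV_imp_deriv DERIV_sum DERIV_cmult has_field_derivative_Z_term)
  show "s \<noteq> fst p" if "p \<in> A" for p using s that by auto
qed

definition zeta_factor :: "complex \<Rightarrow> nat \<Rightarrow> int \<Rightarrow> complex \<Rightarrow> complex" where
  "zeta_factor l m k s = (if m = 0 then (s - l) powi (-k) else exp (of_int k * (fact (m - 1) / (s - l) ^ m)))"

definition zeta_prod :: "(complex \<times> nat) set \<Rightarrow> (complex \<Rightarrow> nat \<Rightarrow> int) \<Rightarrow> complex \<Rightarrow> complex" where
  "zeta_prod A c s = (\<Prod>(l, m)\<in>A. zeta_factor l m (c l m) s)"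

lemma exp_mult_Z_term_deriv0:
  assumes "s \<noteq> l"
  shows "exp (of_int k * Z_term_deriv0 l m s) = zeta_factor l m k s"
proof (cases "m = 0")
  case True
  have "exp (of_int k * Z_term_deriv0 l m s) = (s - l) powr of_int (-k)"
    using True assms by (simp add: Z_term_deriv0_def powr_def)
  also have "\<dots> = (s - l) powi (-k)"
    using assms by (subst complex_powr_of_int) auto
  finally show ?thesis using True by (simp add: zeta_factor_def)
qed (simp add: Z_term_deriv0_def zeta_factor_def)

lemma zetaN_log_poly_eq_zeta_prod:
  assumes A: "finite A" and s: "\<forall>(l, m)\<in>A. Re l < Re s"
  shows "zetaN (log_poly A c) s = zeta_prod A c s"
proof -
  have "zetaN (log_poly A c) s = exp (\<Sum>(l, m)\<in>A. of_int (c l m) * Z_term_deriv0 l m s)"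
    by (simp add: zetaN_log_poly[OF s] deriv_Z_log_poly[OF s])
  also have "\<dots> = (\<Prod>(l, m)\<in>A. exp (of_int (c l m) * Z_term_deriv0 l m s))"
    unfolding case_prod_unfold by (rule exp_sum[OF A])
  also have "\<dots> = zeta_prod A c s"
    unfolding zeta_prod_def
  proof (intro prod.cong refl, clarify)
    fix l m assume "(l, m) \<in> A"
    then have "s \<noteq> l" using s by auto
    then show "exp (of_int (c l m) * Z_term_deriv0 l m s) = zeta_factor l m (c l m) s"
      by (rule exp_mult_Z_term_deriv0)
  qed
  finally show ?thesis .
qed

lemma zetaN_log_poly_eq_zeta_prod_on_halfplane:
  assumes A: "finite A"
  shows "\<exists>\<sigma>::real. \<forall>s. \<sigma> < Re s \<longrightarrow> zetaN (log_poly A c) s = zeta_prod A c s"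
proof (intro exI allI impI)
  fix s assume s: "Max (Re ` fst ` A) < Re s"
  have "Re l \<le> Max (Re ` fst ` A)" if "(l, m) \<in> A" for l m
    using A that by (intro Max_ge) force+
  then have "Re l < Re s" if "(l, m) \<in> A" for l m
    using s that by force
  then show "zetaN (log_poly A c) s = zeta_prod A c s"
    by (intro zetaN_log_poly_eq_zeta_prod A) auto
qed

lemma holomorphic_on_zeta_factor: "zeta_factor l m k holomorphic_on - {l}"
proof -
  have "(\<lambda>s. (s - l) powi (-k)) holomorphic_on - {l}"
    by (intro holomorphic_on_power_int holomorphic_intros) auto
  moreover have "(\<lambda>s. exp (of_int k * (fact (m - 1) / (s - l) ^ m))) holomorphic_on - {l}"
    by (intro holomorphic_intros) auto
  ultimately show ?thesis
    unfolding zeta_factor_def by (cases "m = 0") auto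
qed

lemma holomorphic_on_zeta_prod: "zeta_prod A c holomorphic_on - fst ` A"
  unfolding zeta_prod_def case_prod_unfold
  by (intro holomorphic_on_prod holomorphic_on_subset[OF holomorphic_on_zeta_factor]) force

section \<open>Inversion of the variable\<close>

definition reflect_exps :: "(complex \<times> nat) set \<Rightarrow> (complex \<times> nat) set" where
  "reflect_exps A = (\<lambda>(l, m). (-l, m)) ` A"

definition reflect_coeffs :: "(complex \<Rightarrow> nat \<Rightarrow> int) \<Rightarrow> complex \<Rightarrow> nat \<Rightarrow> int" where
  "reflect_coeffs c l m = (-1)^m * c (-l) m"

lemma inj_on_reflect: "inj_on (\<lambda>(l :: complex, m :: nat). (-l, m)) A"
  by (auto simp: inj_on_def)

lemma fst_reflect_exps: "fst ` reflect_exps A = uminus ` fst ` A"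
  by (force simp: reflect_exps_def image_iff)

lemma log_poly_inverse:
  assumes u: "u > 0"
  shows "log_poly A c (1 / u) = log_poly (reflect_exps A) (reflect_coeffs c) u"
proof -
  have "complex_of_real (1/u) powr l = complex_of_real u powr (-l)" for l
    using u powr_of_real_eq_exp[of "1/u" l] powr_of_real_eq_exp[of u "-l"] by (simp add: ln_div del: of_real_divide)
  moreover have "complex_of_real (ln (1/u)) ^ m = (-1)^m * complex_of_real (ln u) ^ m" for m
    using u by (simp add: ln_div power_minus[symmetric])
  ultimately have "log_poly A c (1 / u) =
      (\<Sum>(l, m)\<in>A. of_int (reflect_coeffs c (-l) m) * complex_of_real u powr (-l) * complex_of_real (ln u) ^ m)"
    unfolding log_poly_def reflect_coeffs_def by (intro sum.cong) auto
  also have "\<dots> = log_poly (reflect_exps A) (reflect_coeffs c) u"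
    unfolding log_poly_def reflect_exps_def by (subst sum.reindex[OF inj_on_reflect]) (simp add: case_prod_unfold o_def)
  finally show ?thesis .
qed

lemma log_poly_one: "log_poly A c 1 = of_int (\<Sum>(l, m)\<in>A. if m = 0 then c l m else 0)"
  unfolding log_poly_def by (simp add: case_prod_unfold power_0_left if_distrib cong: if_cong)

lemma minus_one_powr_of_int: "(-1 :: complex) powr (of_int k) = exp (- of_int k * (\<i> * pi))"
proof -
  have "exp (of_int k * (\<i> * pi)) = exp (- of_int k * (\<i> * pi))"
    by (subst exp_eq) (rule exI[of _ k], simp add: algebra_simps)
  then show ?thesis by (simp add: powr_def)
qed

text \<open>\<open>exp (- k * (\<i> * pi))\<close> is the sign \<open>(-1) powi k\<close>; the factors with \<open>m > 0\<close> are invariant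
  because \<open>reflect_coeffs\<close> compensates the sign of \<open>(s - l)^m\<close>.\<close>
lemma zeta_factor_reflect:
  assumes "z \<noteq> l"
  shows "zeta_factor (-l) m ((-1)^m * k) (-z) = (if m = 0 then exp (- of_int k * (\<i> * pi)) else 1) * zeta_factor l m k z"
proof (cases "m = 0")
  case True
  have "(-1 :: complex) powi (-k) = (-1) powr of_int (-k)"
    by (rule complex_powr_of_int[symmetric]) simp
  also have "\<dots> = exp (- of_int k * (\<i> * pi))"
    by (simp add: powr_def)
  finally have "(l - z) powi (-k) = exp (- of_int k * (\<i> * pi)) * (z - l) powi (-k)"
    using power_int_mult_distrib[of "-1" "z - l" "-k"] by simp
  then show ?thesis using True by (simp add: zeta_factor_def)
next
  case False
  have "(-z - -l) ^ m = (-1) ^ m * (z - l) ^ m"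
    by (simp flip: power_mult_distrib)
  then show ?thesis using False by (simp add: zeta_factor_def)
qed

lemma zeta_prod_reflect:
  assumes A: "finite A" and z: "z \<notin> fst ` A"
  shows "zeta_prod (reflect_exps A) (reflect_coeffs c) (-z) = zeta_prod A c z * (-1) powr log_poly A c 1"
proof -
  have "zeta_prod (reflect_exps A) (reflect_coeffs c) (-z) = (\<Prod>(l, m)\<in>A. zeta_factor (-l) m ((-1)^m * c l m) (-z))"
    unfolding zeta_prod_def reflect_exps_def
    by (subst prod.reindex[OF inj_on_reflect]) (simp add: case_prod_unfold o_def reflect_coeffs_def)
  also have "\<dots> = (\<Prod>(l, m)\<in>A. (if m = 0 then exp (- of_int (c l m) * (\<i> * pi)) else 1) * zeta_factor l m (c l m) z)"
  proof (intro prod.cong refl, clarify)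
    fix l m assume "(l, m) \<in> A"
    then have "z \<noteq> l" using z by force
    then show "zeta_factor (-l) m ((-1)^m * c l m) (-z) =
        (if m = 0 then exp (- of_int (c l m) * (\<i> * pi)) else 1) * zeta_factor l m (c l m) z"
      by (rule zeta_factor_reflect)
  qed
  also have "\<dots> = (\<Prod>(l, m)\<in>A. if m = 0 then exp (- of_int (c l m) * (\<i> * pi)) else 1) * zeta_prod A c z"
    unfolding zeta_prod_def by (simp add: prod.distrib case_prod_unfold)
  also have "(\<Prod>(l, m)\<in>A. if m = 0 then exp (- of_int (c l m) * (\<i> * pi)) else 1) =
      exp (\<Sum>(l, m)\<in>A. if m = 0 then - of_int (c l m) * (\<i> * pi) else 0)"
    by (subst exp_sum[OF A]) (simp add: case_prod_unfold if_distrib cong: if_cong)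
  also have "(\<Sum>(l, m)\<in>A. if m = 0 then - of_int (c l m) * (\<i> * pi) else 0) =
      - of_int (\<Sum>(l, m)\<in>A. if m = 0 then c l m else 0) * (\<i> * pi)"
  proof -
    have "(case p of (l, m) \<Rightarrow> if m = 0 then - of_int (c l m) * (\<i> * pi) else 0) =
        - (of_int (case p of (l, m) \<Rightarrow> if m = 0 then c l m else 0) * (\<i> * pi))" for p
      by (auto split: prod.split)
    then show ?thesis
      by (simp add: of_int_sum sum_distrib_right sum_negf)
  qed
  finally show ?thesis
    unfolding log_poly_one minus_one_powr_of_int by (simp only: mult.commute)
qed

section \<open>Continuations with isolated singularities\<close>

lemma continuation_isolated_zeta_prod:
  assumes "finite A"
  shows "continuation_isolated (zetaN (log_poly A c)) (fst ` A) (zeta_prod A c)"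
  unfolding continuation_isolated_def
proof (intro conjI allI)
  show "\<not> z islimpt fst ` A" for z using assms by (simp add: islimpt_finite)
  show "\<exists>\<sigma>::real. \<forall>s. \<sigma> < Re s \<longrightarrow> zeta_prod A c s = zetaN (log_poly A c) s"
    using zetaN_log_poly_eq_zeta_prod_on_halfplane[OF assms] by metis
qed (rule holomorphic_on_zeta_prod)

text \<open>The complement of a countable closed set is connected, so the identity theorem propagates
  agreement on a half-plane.\<close>
lemma continuation_isolated_unique:
  assumes g: "continuation_isolated f S g" and B: "\<forall>z. \<not> z islimpt B"
    and G: "G holomorphic_on - B" and fG: "\<exists>\<sigma>::real. \<forall>s. \<sigma> < Re s \<longrightarrow> f s = G s"
    and z: "z \<notin> S" "z \<notin> B"
  shows "g z = G z"
proof -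
  obtain \<sigma>1 \<sigma>2 where \<sigma>1: "\<And>s. \<sigma>1 < Re s \<Longrightarrow> g s = f s" and \<sigma>2: "\<And>s. \<sigma>2 < Re s \<Longrightarrow> f s = G s"
    using g fG unfolding continuation_isolated_def by metis
  have S: "\<forall>z. \<not> z islimpt S" and hol: "g holomorphic_on - S"
    using g unfolding continuation_isolated_def by auto
  define \<Omega> where "\<Omega> = - (S \<union> B)"
  have "countable S" "countable B"
    using S B by (intro no_limpt_imp_countable; blast)+
  then have countable: "countable (S \<union> B)" by simp
  have "closed S" "closed B"
    using S B by (auto simp: closed_limpt)
  then have \<Omega>: "open \<Omega>"
    unfolding \<Omega>_def by (intro open_Compl closed_Un)
  define U where "U = {s. Re s > max \<sigma>1 \<sigma>2} \<inter> \<Omega>"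
  have "U \<noteq> {}"
  proof
    assume "U = {}"
    then have "{s. Re s > max \<sigma>1 \<sigma>2} \<subseteq> S \<union> B" by (auto simp: U_def \<Omega>_def)
    then show False
      using uncountable_halfspace_Re_gt countable countable_subset by blast
  qed
  then obtain \<xi> where \<xi>: "\<xi> \<in> U" by blast
  have "(\<lambda>z. g z - G z) z = 0"
  proof (rule analytic_continuation[where f="\<lambda>z. g z - G z" and S=\<Omega> and U=U and \<xi>=\<xi>])
    show "(\<lambda>z. g z - G z) holomorphic_on \<Omega>"
      unfolding \<Omega>_def by (intro holomorphic_on_diff holomorphic_on_subset[OF hol] holomorphic_on_subset[OF G]) auto
    show "connected \<Omega>"
      unfolding \<Omega>_def Compl_eq_Diff_UNIV using countable by (intro connected_open_diff_countable) auto
    show "\<xi> islimpt U"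
      using \<xi> \<Omega> unfolding U_def by (intro open_imp_islimpt open_Int open_halfspace_Re_gt)
    show "g x - G x = 0" if "x \<in> U" for x
      using that \<sigma>1 \<sigma>2 by (auto simp: U_def)
  qed (use \<Omega> \<xi> z in \<open>auto simp: U_def \<Omega>_def\<close>)
  then show ?thesis by simp
qed

lemma eq_if_eventually_eq_isCont:
  fixes f h :: "'a::{perfect_space, t2_space} \<Rightarrow> 'b::t2_space"
  assumes "eventually (\<lambda>x. f x = h x) (at z)" "isCont f z" "isCont h z"
  shows "f z = h z"
proof -
  have "eventually (\<lambda>x. h x = f x) (at z)"
    using assms(1) by (rule eventually_mono) simp
  with assms(3) have "f \<midarrow>z\<rightarrow> h z"
    unfolding isCont_def by (rule Lim_transform_eventually)
  then show ?thesis using assms(2) LIM_unique unfolding isCont_def by blast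
qed

lemma isCont_if_holomorphic_on_Compl:
  assumes "g holomorphic_on - S" "\<forall>z. \<not> z islimpt S" "z \<notin> S"
  shows "isCont g z"
proof -
  have "open (- S)" using assms(2) by (auto simp: closed_limpt)
  then show ?thesis
    using assms(1,3) holomorphic_on_imp_continuous_on continuous_on_eq_continuous_at by blast
qed

text \<open>Off the finitely many singularities both continuations are the explicit products related by
  \<open>zeta_prod_reflect\<close>; at the remaining points equality follows by continuity.\<close>
lemma continuation_isolated_reflect:
  assumes A: "finite A"
    and g: "continuation_isolated (zetaN (log_poly A c)) S g"
    and g': "continuation_isolated (zetaN (log_poly (reflect_exps A) (reflect_coeffs c))) S' g'"
    and z: "z \<notin> S" "- z \<notin> S'"
  shows "g' (- z) = g z * (-1) powr log_poly A c 1"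
proof -
  have S: "\<forall>z. \<not> z islimpt S" "g holomorphic_on - S" and S': "\<forall>z. \<not> z islimpt S'" "g' holomorphic_on - S'"
    using g g' unfolding continuation_isolated_def by auto
  have A': "finite (reflect_exps A)" using A by (simp add: reflect_exps_def)
  have off_poles: "g' (- x) = g x * (-1) powr log_poly A c 1" if x: "x \<notin> S" "- x \<notin> S'" "x \<notin> fst ` A" for x
  proof -
    have "g x = zeta_prod A c x"
      using A x by (intro continuation_isolated_unique[OF g _ holomorphic_on_zeta_prod
            zetaN_log_poly_eq_zeta_prod_on_halfplane]) (auto simp: islimpt_finite)
    moreover have "- x \<notin> fst ` reflect_exps A"
      using x(3) unfolding fst_reflect_exps by force
    then have "g' (- x) = zeta_prod (reflect_exps A) (reflect_coeffs c) (- x)"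
      using A' x by (intro continuation_isolated_unique[OF g' _ holomorphic_on_zeta_prod
            zetaN_log_poly_eq_zeta_prod_on_halfplane]) (auto simp: islimpt_finite)
    ultimately show ?thesis using zeta_prod_reflect[OF A x(3)] by simp
  qed
  define T where "T = S \<union> uminus ` S'"
  have T: "x \<notin> T \<longleftrightarrow> x \<notin> S \<and> - x \<notin> S'" for x
    by (auto simp: T_def image_iff)
  have "closed T"
    using S(1) S'(1) unfolding T_def by (intro closed_Un closed_negations) (auto simp: closed_limpt)
  then have "eventually (\<lambda>x. x \<in> - T) (at z)"
    using z T by (intro eventually_at_in_open') auto
  moreover have "eventually (\<lambda>x. x \<notin> fst ` A) (at z)"
    using A islimpt_finite islimpt_iff_eventually by blast
  ultimately have "eventually (\<lambda>x. g' (- x) = g x * (-1) powr log_poly A c 1) (at z)"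
  proof eventually_elim
    case (elim x)
    then show ?case using T[of x] by (intro off_poles) auto
  qed
  moreover have "isCont g' (- z)"
    by (rule isCont_if_holomorphic_on_Compl[OF S'(2,1) z(2)])
  then have "isCont (\<lambda>x. g' (- x)) z"
    by (rule isCont_o2[rotated]) (intro continuous_intros)
  moreover have "isCont (\<lambda>x. g x * (-1) powr log_poly A c 1) z"
    using isCont_if_holomorphic_on_Compl[OF S(2,1) z(1)] by (intro continuous_intros)
  ultimately show ?thesis by (rule eq_if_eventually_eq_isCont)
qed

theorem proposition3p10:
  fixes A :: "(complex \<times> nat) set" and c :: "complex \<Rightarrow> nat \<Rightarrow> int"
    and N :: "real \<Rightarrow> complex"
  assumes "finite A"
    and "\<forall>u>0. N u = (\<Sum>(l, m)\<in>A. of_int (c l m) * (complex_of_real u) powr l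
                                         * (complex_of_real (ln u)) ^ m)"
  shows "(\<exists>S g. continuation_isolated (zetaN N) S g) \<and>
         (\<forall>S g S' g'. continuation_isolated (zetaN N) S g \<longrightarrow>
            continuation_isolated (zetaN (Nstar N)) S' g' \<longrightarrow>
            (\<forall>s. s \<notin> S \<and> - s \<notin> S' \<longrightarrow>
               g' (- s) = g s * (-1) powr (N 1) \<and>
               (g s \<noteq> 0 \<longrightarrow> g' (- s) / g s = (-1) powr (N 1))))"
proof -
  have N: "N u = log_poly A c u" if "u > 0" for u
    using assms(2) that unfolding log_poly_def by simp
  have zeta: "zetaN N = zetaN (log_poly A c)"
    by (rule zetaN_cong) (simp add: N)
  have zeta_star: "zetaN (Nstar N) = zetaN (log_poly (reflect_exps A) (reflect_coeffs c))"
    by (rule zetaN_cong) (simp add: Nstar_def N log_poly_inverse)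
  show ?thesis
  proof (intro conjI allI impI)
    show "\<exists>S g. continuation_isolated (zetaN N) S g"
      unfolding zeta using continuation_isolated_zeta_prod[OF assms(1)] by blast
    fix S g S' g' s
    assume "continuation_isolated (zetaN N) S g" "continuation_isolated (zetaN (Nstar N)) S' g'"
      and "s \<notin> S \<and> - s \<notin> S'"
    then have "g' (- s) = g s * (-1) powr N 1"
      using continuation_isolated_reflect[OF assms(1)] unfolding zeta zeta_star N[OF zero_less_one] by blast
    then show "g' (- s) = g s * (-1) powr N 1" "g s \<noteq> 0 \<Longrightarrow> g' (- s) / g s = (-1) powr N 1"
      by simp_all
  qed
qed

end
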